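(* Suppose $\vec \theta \in \mathbb R^d$ and $\epsilon > 0$ have the property that for any pair of vectors $\vec x, \vec y \in (\mathbb Z_g)^k$, there are $z \in \mathbb Z$ and $\epsilon_1$ with $|\epsilon_1| < \epsilon$ such that $\vec \theta \cdot Z(\vec x) - \vec \theta \cdot Z(\vec y) = 2 \pi z + \epsilon_1$. Then for any index $(\{i,j\},a)$, there are $z \in \mathbb Z$ and $\epsilon_3$ with $|\epsilon_3| < 2 \epsilon$ such that $\theta_{\{i,j\},a} - \epsilon_3 = \frac{2 \pi}{g} z$.
   Context: Let $g\ge 2$, $k\ge 2$ be integers, $\mathbb Z_g$ the integers mod $g$, and $d=\binom{k}{2}(g-1)$. Index the coordinates of $\mathbb R^d$ by pairs $(\{i,j\},a)$ with $1\le i<j\le k$ and $a\in\mathbb Z_g\setminus\{0\}$. Define $Z:(\mathbb Z_g)^k\to\mathbb R^d$ by $[Z(\vec x)]_{\{i,j\},a}=1-1/g$ if $x_i-x_j=a$ and $-1/g$ otherwise. *)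

theory Defs
  imports Complex_Main
begin

text \<open>Coordinates of R^d: triples (i,j,a) with 1 \<le> i < j \<le> k and a \<in> Z_g - {0},
  where Z_g is represented by {0..<g}, so a ranges over {1..<g}.\<close>
definition idx :: "nat \<Rightarrow> nat \<Rightarrow> (nat \<times> nat \<times> nat) set" where
  "idx k g = {(i, j, a). 1 \<le> i \<and> i < j \<and> j \<le> k \<and> 1 \<le> a \<and> a < g}"

definition zg_vecs :: "nat \<Rightarrow> nat \<Rightarrow> (nat \<Rightarrow> int) set" where
  "zg_vecs k g = {x. \<forall>i. (i \<in> {1..k} \<longrightarrow> x i \<in> {0..<int g}) \<and> (i \<notin> {1..k} \<longrightarrow> x i = 0)}"

definition Zmap :: "nat \<Rightarrow> (nat \<Rightarrow> int) \<Rightarrow> nat \<times> nat \<times> nat \<Rightarrow> real" where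
  "Zmap g x p = (case p of (i, j, a) \<Rightarrow>
     if (x i - x j) mod int g = int a then 1 - 1 / real g else - 1 / real g)"

definition dotZ :: "nat \<Rightarrow> nat \<Rightarrow> (nat \<times> nat \<times> nat \<Rightarrow> real) \<Rightarrow> (nat \<Rightarrow> int) \<Rightarrow> real" where
  "dotZ k g \<theta> x = (\<Sum>p\<in>idx k g. \<theta> p * Zmap g x p)"

end

theory Submission
  imports Defs
begin

text \<open>Fix a coordinate (i, j, a) and, for t \<in> Z_g, let x_t put a at position i, 0 at position j
  and t everywhere else; let y_t be x_t with position i reset to 0. Summing
  \<theta>\<cdot>Z(x_t) - \<theta>\<cdot>Z(y_t) over all t, every coordinate of \<theta> other than \<theta>_(i,j,a) cancels, because
  differences involving the varying entry t run through all of Z_g equally often for x_t and y_t.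
  Hence g \<theta>_(i,j,a) is a sum of g terms, each within \<epsilon> of 2\<pi>Z, so \<theta>_(i,j,a) is within \<epsilon> of
  (2\<pi>/g) Z, which is better than the stated 2\<epsilon>.\<close>

lemma sum_residues_reflect:
  fixes n c :: int
  assumes "n > 0"
  shows "(\<Sum>t\<in>{0..<n}. h ((c - t) mod n)) = (\<Sum>t\<in>{0..<n}. h t :: real)"
  by (rule sum.reindex_bij_witness[where i="\<lambda>s. (c - s) mod n" and j="\<lambda>s. (c - s) mod n"])
     (use assms in \<open>auto simp: mod_diff_right_eq\<close>)

lemma sum_residues_translate:
  fixes n c :: int
  assumes "n > 0"
  shows "(\<Sum>t\<in>{0..<n}. h ((t - c) mod n)) = (\<Sum>t\<in>{0..<n}. h t :: real)"
  by (rule sum.reindex_bij_witness[where i="\<lambda>s. (s + c) mod n" and j="\<lambda>s. (s - c) mod n"])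
     (use assms in \<open>auto simp: mod_add_left_eq mod_diff_left_eq\<close>)

lemma mean_near_lattice:
  fixes f :: "'a \<Rightarrow> real"
  assumes "finite T" "T \<noteq> {}"
    and sum_f: "(\<Sum>t\<in>T. f t) = real (card T) * \<theta>"
    and near: "\<forall>t\<in>T. \<exists>z::int. \<exists>e. \<bar>e\<bar> < \<epsilon> \<and> f t = c * real_of_int z + e"
  shows "\<exists>z::int. \<exists>e. \<bar>e\<bar> < \<epsilon> \<and> \<theta> - e = c / real (card T) * real_of_int z"
proof -
  from near obtain z e where ze: "\<And>t. t \<in> T \<Longrightarrow> \<bar>e t\<bar> < \<epsilon> \<and> f t = c * real_of_int (z t) + e t"
    by metis
  have n_pos: "real (card T) > 0"
    using assms(1,2) by (simp add: card_gt_0_iff)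
  have "real (card T) * \<theta> = c * real_of_int (\<Sum>t\<in>T. z t) + (\<Sum>t\<in>T. e t)"
    using ze by (simp add: sum_f[symmetric] sum.distrib sum_distrib_left)
  moreover have "\<bar>\<Sum>t\<in>T. e t\<bar> < real (card T) * \<epsilon>"
  proof -
    have "\<bar>\<Sum>t\<in>T. e t\<bar> \<le> (\<Sum>t\<in>T. \<bar>e t\<bar>)" by (rule sum_abs)
    also have "\<dots> < (\<Sum>t\<in>T. \<epsilon>)"
      using assms(1,2) ze by (intro sum_strict_mono) auto
    finally show ?thesis by simp
  qed
  ultimately show ?thesis
    using n_pos
    by (intro exI[of _ "\<Sum>t\<in>T. z t"] exI[of _ "(\<Sum>t\<in>T. e t) / real (card T)"])
       (auto simp: abs_divide field_simps)
qed

lemma finite_idx: "finite (idx k g)"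
proof (rule finite_subset)
  show "idx k g \<subseteq> {1..k} \<times> {1..k} \<times> {1..<g}" unfolding idx_def by auto
qed auto

definition probe :: "nat \<Rightarrow> nat \<Rightarrow> nat \<Rightarrow> nat \<Rightarrow> int \<Rightarrow> nat \<Rightarrow> int" where
  "probe k i j a t = (\<lambda>l. if l = i then int a else if l = j then 0 else if l \<in> {1..k} then t else 0)"

lemma probe_in_zg_vecs:
  assumes "(i, j, a) \<in> idx k g" "t \<in> {0..<int g}"
  shows "probe k i j a t \<in> zg_vecs k g" "probe k i j 0 t \<in> zg_vecs k g"
  using assms unfolding probe_def zg_vecs_def idx_def by auto

lemma sum_Zmap_probe_diff:
  assumes p: "(i, j, a) \<in> idx k g" and q: "(i', j', b) \<in> idx k g"
  shows "(\<Sum>t\<in>{0..<int g}. Zmap g (probe k i j a t) (i', j', b) - Zmap g (probe k i j 0 t) (i', j', b))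
         = of_bool ((i', j', b) = (i, j, a)) * real g"
proof -
  from p q have ij: "1 \<le> i" "i < j" "j \<le> k" "1 \<le> a" "a < g"
    and ij': "1 \<le> i'" "i' < j'" "j' \<le> k" "1 \<le> b" "b < g"
    unfolding idx_def by auto
  have g_pos: "int g > 0" using ij by simp
  let ?hit = "\<lambda>s. of_bool (s = int b) :: real"
  have Zmap_diff: "Zmap g x (i', j', b) - Zmap g y (i', j', b)
      = ?hit ((x i' - x j') mod int g) - ?hit ((y i' - y j') mod int g)" for x y
    by (simp add: Zmap_def)
  consider "i' = i" "j' = j" | "i' = i" "j' \<noteq> j" | "j' = i" | "i' \<noteq> i" "j' \<noteq> i"
    by blast
  then show ?thesis
  proof cases
    case 1
    then show ?thesis unfolding Zmap_diff using ij ij' by (simp add: probe_def)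
  next
    case 2
    then have "i \<noteq> j'" using ij' by simp
    then show ?thesis
      unfolding Zmap_diff
      using 2 ij' sum_residues_reflect[OF g_pos, of ?hit "int a"] sum_residues_reflect[OF g_pos, of ?hit 0]
      by (simp add: probe_def sum_subtractf)
  next
    case 3
    then have "i' \<noteq> j" using ij ij' by simp
    then show ?thesis
      unfolding Zmap_diff
      using 3 ij ij' sum_residues_translate[OF g_pos, of ?hit "int a"] sum_residues_translate[OF g_pos, of ?hit 0]
      by (simp add: probe_def sum_subtractf)
  next
    case 4
    then show ?thesis unfolding Zmap_diff by (simp add: probe_def)
  qed
qed

lemma sum_dotZ_probe_diff:
  assumes p: "(i, j, a) \<in> idx k g"
  shows "(\<Sum>t\<in>{0..<int g}. dotZ k g \<theta> (probe k i j a t) - dotZ k g \<theta> (probe k i j 0 t))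
         = real g * \<theta> (i, j, a)"
proof -
  have "(\<Sum>t\<in>{0..<int g}. dotZ k g \<theta> (probe k i j a t) - dotZ k g \<theta> (probe k i j 0 t))
      = (\<Sum>q\<in>idx k g. \<theta> q * (\<Sum>t\<in>{0..<int g}. Zmap g (probe k i j a t) q - Zmap g (probe k i j 0 t) q))"
    unfolding dotZ_def
    by (simp add: sum_subtractf[symmetric] sum_distrib_left right_diff_distrib sum.swap[of _ "idx k g"])
  also have "\<dots> = (\<Sum>q\<in>idx k g. \<theta> q * (of_bool (q = (i, j, a)) * real g))"
    using p by (intro sum.cong) (auto simp: sum_Zmap_probe_diff)
  also have "\<dots> = real g * \<theta> (i, j, a)"
    using p finite_idx[of k g] by (simp add: of_bool_def if_distrib[of "(*) _"] sum.delta' mult.commute cong: if_cong)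
  finally show ?thesis .
qed

theorem corollary2p2:
  fixes g k :: nat and \<theta> :: "nat \<times> nat \<times> nat \<Rightarrow> real" and \<epsilon> :: real
  assumes "g \<ge> 2" and "k \<ge> 2" and "\<epsilon> > 0"
    and "\<forall>x\<in>zg_vecs k g. \<forall>y\<in>zg_vecs k g. \<exists>z::int. \<exists>\<epsilon>1::real.
           \<bar>\<epsilon>1\<bar> < \<epsilon> \<and> dotZ k g \<theta> x - dotZ k g \<theta> y = 2 * pi * real_of_int z + \<epsilon>1"
  shows "\<forall>p\<in>idx k g. \<exists>z::int. \<exists>\<epsilon>3::real.
           \<bar>\<epsilon>3\<bar> < 2 * \<epsilon> \<and> \<theta> p - \<epsilon>3 = 2 * pi / real g * real_of_int z"
proof
  fix p assume p: "p \<in> idx k g"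
  obtain i j a where p_eq: "p = (i, j, a)" by (cases p)
  let ?T = "{0..<int g}"
  have "\<exists>z::int. \<exists>e. \<bar>e\<bar> < \<epsilon> \<and> \<theta> p - e = 2 * pi / real (card ?T) * real_of_int z"
  proof (rule mean_near_lattice)
    show "finite ?T" "?T \<noteq> {}" using assms(1) by auto
    show "(\<Sum>t\<in>?T. dotZ k g \<theta> (probe k i j a t) - dotZ k g \<theta> (probe k i j 0 t))
          = real (card ?T) * \<theta> p"
      using sum_dotZ_probe_diff p p_eq by simp
    show "\<forall>t\<in>?T. \<exists>z::int. \<exists>e. \<bar>e\<bar> < \<epsilon> \<and>
            dotZ k g \<theta> (probe k i j a t) - dotZ k g \<theta> (probe k i j 0 t) = 2 * pi * real_of_int z + e"
      using assms(4) probe_in_zg_vecs p p_eq by blast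
  qed
  then show "\<exists>z::int. \<exists>\<epsilon>3. \<bar>\<epsilon>3\<bar> < 2 * \<epsilon> \<and> \<theta> p - \<epsilon>3 = 2 * pi / real g * real_of_int z"
    using assms(3) by force
qed

end
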